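(* Let $\alpha\in(0,1)$, $\delta>0$, $\epsilon>0$, and let $\lambda$ satisfy $0<\lambda<\alpha\,v_{\min}/s_{\max}$. Let $(\bar y,\bar C)$ be an optimal solution of the LP. Then for every task $T_{i,j}\in\mathcal T$, $$\bar C_{i,j}\ge(1-\alpha)\,\tau_{t^\alpha_{i,j}},$$ where $t^\alpha_{i,j}=\min\{\ell:\sum_{t=0}^\ell\sum_{s\in\mathcal V}\bar y_{i,j,s,t}|I_t|/p_{i,j,s}\ge\alpha\}$.
   Context: Problem MR. Jobs $\mathcal J=\{1,\dots,n\}$, processors $\mathcal P=\{1,\dots,m\}$. Job $j$ has weight $w_j>0$, release date $r_j\ge0$, and a nonempty set of Map tasks and a nonempty set of Reduce tasks, preassigned to processors with at most one task of each job per processor; $T_{i,j}$ is the task of job $j$ on processor $i$, with work $v_{i,j}\ge0$; $\mathcal T,\mathcal M,\mathcal R$ are the sets of all, Map, Reduce tasks. Running at speed $s$ uses power $s^\beta$ ($\beta>1$ fixed); $E>0$ is the energy budget. Notation: $w_{\min},w_{\max}$ min/max weights, $r_{\max}=\max_j r_j$, $v_{\max}=\max v_{i,j}$, $v_{\min}=\min\{v_{i,j}:v_{i,j}>0\}$, $t_{\max}=\frac{w_{\max}}{w_{\min}}\big(nr_{\max}+n(n+1)(|\mathcal T|v_{\max}^\beta/E)^{1/(\beta-1)}\big)$, $s_L=v_{\min}/t_{\max}$, $s_U=(E/v_{\min})^{1/(\beta-1)}$, $k=\lceil\log_{1+\epsilon}(s_U/s_L)\rceil$, $\mathcal V=\{s_L(1+\epsilon)^\ell:0\le\ell\le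 k\}$, $s_{\max}=s_L(1+\epsilon)^k$. LP: let $u$ be the least integer with $\lambda(1+\delta)^{u-1}\ge t_{\max}$, $\tau_0=0$, $\tau_t=\lambda(1+\delta)^{t-1}$ ($1\le t\le u+1$), $I_t=(\tau_t,\tau_{t+1}]$ of length $|I_t|$, $p_{i,j,s}=v_{i,j}/s$. Variables $y_{i,j,s,t},C_{i,j},C_j\ge0$. Minimize $\sum_jw_jC_j$ s.t. (1) $\sum_s\sum_{t=0}^u y_{i,j,s,t}|I_t|/p_{i,j,s}=1$ for all tasks; (2) $\sum_{j}\sum_s y_{i,j,s,t}\le1$ for all $i,t$; (3) $C_{i,j}\ge\frac12\sum_s y_{i,j,s,0}|I_0|(\frac1{p_{i,j,s}}+1)+\sum_{t=1}^u\sum_s(\frac{y_{i,j,s,t}|I_t|}{p_{i,j,s}}\tau_t+\frac12y_{i,j,s,t}|I_t|)$; (4) $C_j\ge C_{i,j}$; (5) $\sum_{T_{i,j}}\sum_s\sum_t y_{i,j,s,t}|I_t|s^\beta\le E$; (6) for $T_{i,j}\in\mathcal M$, $T_{i',j}\in\mathcal R$, $0\le\ell\le u$: $\sum_{t=0}^\ell\sum_s\frac{y_{i,j,s,t}|I_t|}{p_{i,j,s}}\ge\sum_{t=0}^\ell\sum_s\frac{y_{i',j,s,t}|I_t|}{p_{i',j,s}}$; (7) $y_{i,j,s,t}=0$ whenever $\tau_t<r_j$. *)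

theory Defs
  imports Complex_Main
begin

text \<open>An instance of problem MR. Task T_{i,j} is the pair (i,j): processor i, job j.\<close>
record mr_inst =
  nJ :: nat
  mP :: nat
  wt :: "nat \<Rightarrow> real"
  rel :: "nat \<Rightarrow> real"
  MapT :: "(nat \<times> nat) set"
  RedT :: "(nat \<times> nat) set"
  work :: "nat \<Rightarrow> nat \<Rightarrow> real"
  beta :: real
  energy :: real

definition tasks :: "mr_inst \<Rightarrow> (nat \<times> nat) set" where
  "tasks I = MapT I \<union> RedT I"

definition valid_instance :: "mr_inst \<Rightarrow> bool" where
  "valid_instance I \<longleftrightarrow>
     (\<forall>j\<in>{1..nJ I}. wt I j > 0 \<and> rel I j \<ge> 0) \<and>
     MapT I \<subseteq> {1..mP I} \<times> {1..nJ I} \<and> RedT I \<subseteq> {1..mP I} \<times> {1..nJ I} \<and>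
     MapT I \<inter> RedT I = {} \<and>
     (\<forall>j\<in>{1..nJ I}. (\<exists>i. (i,j) \<in> MapT I) \<and> (\<exists>i. (i,j) \<in> RedT I)) \<and>
     (\<forall>(i,j)\<in>tasks I. work I i j \<ge> 0) \<and>
     beta I > 1 \<and> energy I > 0"

definition wmin :: "mr_inst \<Rightarrow> real" where "wmin I = Min (wt I ` {1..nJ I})"
definition wmax :: "mr_inst \<Rightarrow> real" where "wmax I = Max (wt I ` {1..nJ I})"
definition rmax :: "mr_inst \<Rightarrow> real" where "rmax I = Max (rel I ` {1..nJ I})"
definition vmax :: "mr_inst \<Rightarrow> real" where
  "vmax I = Max ((\<lambda>(i,j). work I i j) ` tasks I)"
definition vmin :: "mr_inst \<Rightarrow> real" where
  "vmin I = Min {work I i j | i j. (i,j) \<in> tasks I \<and> work I i j > 0}"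

definition tmax :: "mr_inst \<Rightarrow> real" where
  "tmax I = (wmax I / wmin I) *
     (real (nJ I) * rmax I + real (nJ I) * real (nJ I + 1) *
        (real (card (tasks I)) * vmax I powr beta I / energy I) powr (1 / (beta I - 1)))"

definition sL :: "mr_inst \<Rightarrow> real" where "sL I = vmin I / tmax I"
definition sU :: "mr_inst \<Rightarrow> real" where
  "sU I = (energy I / vmin I) powr (1 / (beta I - 1))"
definition kk :: "mr_inst \<Rightarrow> real \<Rightarrow> int" where
  "kk I \<epsilon> = \<lceil>log (1 + \<epsilon>) (sU I / sL I)\<rceil>"
definition speeds :: "mr_inst \<Rightarrow> real \<Rightarrow> real set" where
  "speeds I \<epsilon> = (\<lambda>l::nat. sL I * (1 + \<epsilon>) ^ l) ` {l. int l \<le> kk I \<epsilon>}"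
definition smax :: "mr_inst \<Rightarrow> real \<Rightarrow> real" where
  "smax I \<epsilon> = sL I * (1 + \<epsilon>) ^ nat (kk I \<epsilon>)"

definition uu :: "mr_inst \<Rightarrow> real \<Rightarrow> real \<Rightarrow> nat" where
  "uu I \<delta> lam = (LEAST u::nat. lam * (1 + \<delta>) powr (real u - 1) \<ge> tmax I)"

definition tau :: "real \<Rightarrow> real \<Rightarrow> nat \<Rightarrow> real" where
  "tau \<delta> lam t = (if t = 0 then 0 else lam * (1 + \<delta>) ^ (t - 1))"

definition Ilen :: "real \<Rightarrow> real \<Rightarrow> nat \<Rightarrow> real" where
  "Ilen \<delta> lam t = tau \<delta> lam (Suc t) - tau \<delta> lam t"

definition ptime :: "mr_inst \<Rightarrow> nat \<Rightarrow> nat \<Rightarrow> real \<Rightarrow> real" where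
  "ptime I i j s = work I i j / s"

definition frac :: "mr_inst \<Rightarrow> real \<Rightarrow> real \<Rightarrow> (nat \<Rightarrow> nat \<Rightarrow> real \<Rightarrow> nat \<Rightarrow> real)
                     \<Rightarrow> nat \<Rightarrow> nat \<Rightarrow> real \<Rightarrow> nat \<Rightarrow> real" where
  "frac I \<delta> lam y i j s t = y i j s t * Ilen \<delta> lam t / ptime I i j s"

definition lp_feasible ::
  "mr_inst \<Rightarrow> real \<Rightarrow> real \<Rightarrow> real \<Rightarrow> (nat \<Rightarrow> nat \<Rightarrow> real \<Rightarrow> nat \<Rightarrow> real)
   \<Rightarrow> (nat \<Rightarrow> nat \<Rightarrow> real) \<Rightarrow> (nat \<Rightarrow> real) \<Rightarrow> bool" where
  "lp_feasible I \<epsilon> \<delta> lam y Ct Cj \<longleftrightarrow>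
    (let T = tasks I; V = speeds I \<epsilon>; u = uu I \<delta> lam; L = Ilen \<delta> lam;
         f = frac I \<delta> lam y in
     (\<forall>(i,j)\<in>T. \<forall>s\<in>V. \<forall>t\<le>u. y i j s t \<ge> 0) \<and>
     (\<forall>(i,j)\<in>T. Ct i j \<ge> 0) \<and> (\<forall>j\<in>{1..nJ I}. Cj j \<ge> 0) \<and>
     \<comment> \<open>(1)\<close>
     (\<forall>(i,j)\<in>T. (\<Sum>s\<in>V. \<Sum>t\<le>u. f i j s t) = 1) \<and>
     \<comment> \<open>(2)\<close>
     (\<forall>i\<in>{1..mP I}. \<forall>t\<le>u. (\<Sum>j\<in>{j\<in>{1..nJ I}. (i,j) \<in> T}. \<Sum>s\<in>V. y i j s t) \<le> 1) \<and>
     \<comment> \<open>(3)\<close>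
     (\<forall>(i,j)\<in>T. Ct i j \<ge>
        1/2 * (\<Sum>s\<in>V. y i j s 0 * L 0 * (1 / ptime I i j s + 1))
        + (\<Sum>t\<in>{1..u}. \<Sum>s\<in>V. f i j s t * tau \<delta> lam t + 1/2 * y i j s t * L t)) \<and>
     \<comment> \<open>(4)\<close>
     (\<forall>(i,j)\<in>T. Cj j \<ge> Ct i j) \<and>
     \<comment> \<open>(5)\<close>
     (\<Sum>(i,j)\<in>T. \<Sum>s\<in>V. \<Sum>t\<le>u. y i j s t * L t * s powr beta I) \<le> energy I \<and>
     \<comment> \<open>(6)\<close>
     (\<forall>(i,j)\<in>MapT I. \<forall>i'. (i',j) \<in> RedT I \<longrightarrow> (\<forall>l\<le>u.
        (\<Sum>t\<le>l. \<Sum>s\<in>V. f i j s t) \<ge> (\<Sum>t\<le>l. \<Sum>s\<in>V. f i' j s t))) \<and>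
     \<comment> \<open>(7)\<close>
     (\<forall>(i,j)\<in>T. \<forall>s\<in>V. \<forall>t\<le>u. tau \<delta> lam t < rel I j \<longrightarrow> y i j s t = 0))"

definition lp_objective :: "mr_inst \<Rightarrow> (nat \<Rightarrow> real) \<Rightarrow> real" where
  "lp_objective I Cj = (\<Sum>j\<in>{1..nJ I}. wt I j * Cj j)"

definition lp_optimal ::
  "mr_inst \<Rightarrow> real \<Rightarrow> real \<Rightarrow> real \<Rightarrow> (nat \<Rightarrow> nat \<Rightarrow> real \<Rightarrow> nat \<Rightarrow> real)
   \<Rightarrow> (nat \<Rightarrow> nat \<Rightarrow> real) \<Rightarrow> (nat \<Rightarrow> real) \<Rightarrow> bool" where
  "lp_optimal I \<epsilon> \<delta> lam y Ct Cj \<longleftrightarrow>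
     lp_feasible I \<epsilon> \<delta> lam y Ct Cj \<and>
     (\<forall>y' Ct' Cj'. lp_feasible I \<epsilon> \<delta> lam y' Ct' Cj' \<longrightarrow>
        lp_objective I Cj \<le> lp_objective I Cj')"

definition t_alpha ::
  "mr_inst \<Rightarrow> real \<Rightarrow> real \<Rightarrow> real \<Rightarrow> real \<Rightarrow> (nat \<Rightarrow> nat \<Rightarrow> real \<Rightarrow> nat \<Rightarrow> real)
   \<Rightarrow> nat \<Rightarrow> nat \<Rightarrow> nat" where
  "t_alpha I \<epsilon> \<delta> lam \<alpha> y i j =
     (LEAST l. l \<le> uu I \<delta> lam \<and>
        (\<Sum>t\<le>l. \<Sum>s\<in>speeds I \<epsilon>. frac I \<delta> lam y i j s t) \<ge> \<alpha>)"

end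

theory Submission
  imports Defs
begin

text \<open>Constraint (3) bounds C_{i,j} from below by the average of the interval start times
  \<open>\<tau>_t\<close>, weighted by the fraction of the task processed in interval t. At least a
  fraction \<open>1 - \<alpha>\<close> of the task is processed in intervals \<open>t \<ge> t^\<alpha>_{i,j}\<close>,
  all of which start no earlier than \<open>\<tau>_{t^\<alpha>_{i,j}}\<close>; monotonicity of \<open>\<tau>\<close> gives the bound.\<close>

lemma weighted_sum_ge_first_crossing:
  fixes g \<tau> :: "nat \<Rightarrow> real"
  assumes g_nonneg: "\<And>t. t \<le> u \<Longrightarrow> 0 \<le> g t"
    and g_sum: "(\<Sum>t\<le>u. g t) = 1"
    and "0 \<le> \<alpha>" "\<alpha> < 1"
    and \<tau>_nonneg: "\<And>t. 0 \<le> \<tau> t"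
    and \<tau>_mono: "\<And>t t'. t \<le> t' \<Longrightarrow> \<tau> t \<le> \<tau> t'"
  shows "(1 - \<alpha>) * \<tau> (LEAST l. l \<le> u \<and> \<alpha> \<le> (\<Sum>t\<le>l. g t)) \<le> (\<Sum>t\<le>u. g t * \<tau> t)"
proof -
  define ta where "ta = (LEAST l. l \<le> u \<and> \<alpha> \<le> (\<Sum>t\<le>l. g t))"
  have "u \<le> u \<and> \<alpha> \<le> (\<Sum>t\<le>u. g t)" using g_sum \<open>\<alpha> < 1\<close> by simp
  then have ta_le: "ta \<le> u" unfolding ta_def by (rule LeastI2) simp
  have head: "(\<Sum>t<ta. g t) \<le> \<alpha>"
  proof (cases ta)
    case (Suc m)
    then have "\<not> (m \<le> u \<and> \<alpha> \<le> (\<Sum>t\<le>m. g t))"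
      unfolding ta_def by (metis lessI not_less_Least)
    with Suc ta_le show ?thesis by (simp add: lessThan_Suc_atMost)
  qed (simp add: \<open>0 \<le> \<alpha>\<close>)
  have split: "{..u} = {..<ta} \<union> {ta..u}" using ta_le by auto
  have "(\<Sum>t\<le>u. g t) = (\<Sum>t<ta. g t) + (\<Sum>t\<in>{ta..u}. g t)"
    unfolding split by (rule sum.union_disjoint) auto
  then have tail: "1 - \<alpha> \<le> (\<Sum>t\<in>{ta..u}. g t)" using g_sum head by linarith
  have "(1 - \<alpha>) * \<tau> ta \<le> (\<Sum>t\<in>{ta..u}. g t) * \<tau> ta"
    using tail \<tau>_nonneg by (rule mult_right_mono)
  also have "\<dots> = (\<Sum>t\<in>{ta..u}. g t * \<tau> ta)" by (rule sum_distrib_right)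
  also have "\<dots> \<le> (\<Sum>t\<in>{ta..u}. g t * \<tau> t)"
    by (rule sum_mono) (simp add: g_nonneg \<tau>_mono mult_left_mono)
  also have "\<dots> \<le> (\<Sum>t\<le>u. g t * \<tau> t)"
    by (rule sum_mono2) (auto intro: g_nonneg \<tau>_nonneg mult_nonneg_nonneg)
  finally show ?thesis unfolding ta_def .
qed

lemma tau_nonneg: "0 \<le> \<delta> \<Longrightarrow> 0 \<le> lam \<Longrightarrow> 0 \<le> tau \<delta> lam t"
  by (simp add: tau_def)

lemma tau_mono: "0 \<le> \<delta> \<Longrightarrow> 0 \<le> lam \<Longrightarrow> t \<le> t' \<Longrightarrow> tau \<delta> lam t \<le> tau \<delta> lam t'"
  by (auto simp: tau_def intro!: mult_left_mono power_increasing)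

lemma Ilen_nonneg: "0 \<le> \<delta> \<Longrightarrow> 0 \<le> lam \<Longrightarrow> 0 \<le> Ilen \<delta> lam t"
  by (simp add: Ilen_def tau_mono)

lemma finite_speeds: "finite (speeds I \<epsilon>)"
proof -
  have "{l. int l \<le> kk I \<epsilon>} \<subseteq> {..nat (kk I \<epsilon>)}" by auto
  then show ?thesis unfolding speeds_def by (auto intro: finite_subset)
qed

lemma speeds_pos: "0 < sL I \<Longrightarrow> 0 < \<epsilon> \<Longrightarrow> s \<in> speeds I \<epsilon> \<Longrightarrow> 0 < s"
  by (auto simp: speeds_def)

lemma finite_tasks: "valid_instance I \<Longrightarrow> finite (tasks I)"
  by (rule finite_subset[where B = "{1..mP I} \<times> {1..nJ I}"])
    (auto simp: valid_instance_def tasks_def)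

lemma vmin_pos:
  assumes "valid_instance I" "(i, j) \<in> tasks I" "0 < work I i j"
  shows "0 < vmin I"
proof -
  let ?W = "{work I i j | i j. (i, j) \<in> tasks I \<and> 0 < work I i j}"
  have "?W \<subseteq> (\<lambda>(i, j). work I i j) ` tasks I" by auto
  then have "finite ?W" by (rule finite_subset) (simp add: finite_tasks assms(1))
  moreover have "?W \<noteq> {}" using assms(2,3) by blast
  ultimately have "Min ?W \<in> ?W" by (rule Min_in)
  then show ?thesis unfolding vmin_def by auto
qed

lemma sL_pos:
  assumes "0 < \<alpha>" "0 < \<epsilon>" "0 < vmin I" "0 < lam" "lam < \<alpha> * vmin I / smax I \<epsilon>"
  shows "0 < sL I"
proof -
  have "0 < \<alpha> * vmin I / smax I \<epsilon>" using assms(4,5) by linarith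
  then have "0 < smax I \<epsilon>"
    using mult_pos_pos[OF assms(1,3)] by (auto simp: zero_less_divide_iff)
  then show ?thesis using assms(2) by (simp add: smax_def zero_less_mult_iff)
qed

lemma frac_nonneg:
  "0 \<le> y i j s t \<Longrightarrow> 0 < s \<Longrightarrow> 0 \<le> work I i j \<Longrightarrow> 0 \<le> \<delta> \<Longrightarrow> 0 \<le> lam
   \<Longrightarrow> 0 \<le> frac I \<delta> lam y i j s t"
  by (simp add: frac_def ptime_def Ilen_nonneg)

text \<open>A task of zero work has \<open>p_{i,j,s} = 0\<close>, so every term of constraint (1) is a
  division by zero, hence 0, and (1) fails.\<close>
lemma lp_feasible_work_pos:
  assumes "valid_instance I" "lp_feasible I \<epsilon> \<delta> lam y Ct Cj" "(i, j) \<in> tasks I"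
  shows "0 < work I i j"
proof (rule ccontr)
  assume "\<not> 0 < work I i j"
  with assms(1,3) have "work I i j = 0" unfolding valid_instance_def by fastforce
  then have "frac I \<delta> lam y i j s t = 0" for s t by (simp add: frac_def ptime_def)
  then show False using assms(2,3) unfolding lp_feasible_def Let_def by auto
qed

lemma lp_feasible_Ct_ge_weighted_start_times:
  assumes "valid_instance I" "lp_feasible I \<epsilon> \<delta> lam y Ct Cj" "(i, j) \<in> tasks I"
    and speeds_pos: "\<And>s. s \<in> speeds I \<epsilon> \<Longrightarrow> 0 < s" and "0 \<le> \<delta>" "0 \<le> lam"
  shows "(\<Sum>t\<le>uu I \<delta> lam. (\<Sum>s\<in>speeds I \<epsilon>. frac I \<delta> lam y i j s t) * tau \<delta> lam t) \<le> Ct i j"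
proof -
  define V where "V = speeds I \<epsilon>"
  define u where "u = uu I \<delta> lam"
  define f where "f = frac I \<delta> lam y i j"
  have y_nonneg: "\<And>s t. s \<in> V \<Longrightarrow> t \<le> u \<Longrightarrow> 0 \<le> y i j s t"
    and C3: "1/2 * (\<Sum>s\<in>V. y i j s 0 * Ilen \<delta> lam 0 * (1 / ptime I i j s + 1))
        + (\<Sum>t\<in>{1..u}. \<Sum>s\<in>V. f s t * tau \<delta> lam t + 1/2 * y i j s t * Ilen \<delta> lam t)
        \<le> Ct i j"
    using assms(2,3) unfolding lp_feasible_def Let_def V_def u_def f_def by blast+
  have "0 \<le> work I i j" using assms(1,3) unfolding valid_instance_def by auto
  then have inv_ptime_nonneg: "s \<in> V \<Longrightarrow> 0 \<le> 1 / ptime I i j s" for s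
    using speeds_pos unfolding V_def ptime_def by force
  have "(\<Sum>t\<le>u. (\<Sum>s\<in>V. f s t) * tau \<delta> lam t) = (\<Sum>t\<in>{1..u}. \<Sum>s\<in>V. f s t * tau \<delta> lam t)"
    by (simp add: atMost_atLeast0 sum.atLeast_Suc_atMost tau_def sum_distrib_right)
  also have "\<dots> \<le> (\<Sum>t\<in>{1..u}. \<Sum>s\<in>V. f s t * tau \<delta> lam t + 1/2 * y i j s t * Ilen \<delta> lam t)"
    by (intro sum_mono) (simp add: y_nonneg Ilen_nonneg assms(5,6))
  also have "\<dots> \<le> Ct i j"
  proof -
    have "0 \<le> (\<Sum>s\<in>V. y i j s 0 * Ilen \<delta> lam 0 * (1 / ptime I i j s + 1))"
      by (intro sum_nonneg mult_nonneg_nonneg)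
        (auto simp: y_nonneg Ilen_nonneg assms(5,6) dest!: inv_ptime_nonneg)
    then show ?thesis using C3 by linarith
  qed
  finally show ?thesis unfolding V_def u_def f_def .
qed

theorem lemma4:
  fixes I :: mr_inst and \<alpha> \<delta> \<epsilon> lam :: real
    and y :: "nat \<Rightarrow> nat \<Rightarrow> real \<Rightarrow> nat \<Rightarrow> real"
    and Ct :: "nat \<Rightarrow> nat \<Rightarrow> real" and Cj :: "nat \<Rightarrow> real"
  assumes "valid_instance I"
    and "0 < \<alpha>" "\<alpha> < 1" "\<delta> > 0" "\<epsilon> > 0"
    and "0 < lam" "lam < \<alpha> * vmin I / smax I \<epsilon>"
    and "lp_optimal I \<epsilon> \<delta> lam y Ct Cj"
    and "(i, j) \<in> tasks I"
  shows "Ct i j \<ge> (1 - \<alpha>) * tau \<delta> lam (t_alpha I \<epsilon> \<delta> lam \<alpha> y i j)"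
proof -
  define g where "g t = (\<Sum>s\<in>speeds I \<epsilon>. frac I \<delta> lam y i j s t)" for t
  have feas: "lp_feasible I \<epsilon> \<delta> lam y Ct Cj" using assms(8) by (simp add: lp_optimal_def)
  have "0 < vmin I" using vmin_pos lp_feasible_work_pos assms(1,9) feas by blast
  then have speeds_pos: "s \<in> speeds I \<epsilon> \<Longrightarrow> 0 < s" for s
    using sL_pos speeds_pos assms(2,5,6,7) by blast
  have "0 \<le> g t" if "t \<le> uu I \<delta> lam" for t
    using feas assms(1,4,6,9) that speeds_pos
    unfolding g_def lp_feasible_def Let_def valid_instance_def
    by (fastforce intro!: sum_nonneg frac_nonneg)
  moreover have "(\<Sum>t\<le>uu I \<delta> lam. g t) = 1"
    using feas assms(9) unfolding g_def lp_feasible_def Let_def by (subst sum.swap) blast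
  ultimately have "(1 - \<alpha>) * tau \<delta> lam (t_alpha I \<epsilon> \<delta> lam \<alpha> y i j)
      \<le> (\<Sum>t\<le>uu I \<delta> lam. g t * tau \<delta> lam t)"
    unfolding t_alpha_def g_def[symmetric] using assms(2,3,4,6)
    by (intro weighted_sum_ge_first_crossing) (auto intro: tau_nonneg tau_mono)
  also have "\<dots> \<le> Ct i j"
    unfolding g_def using lp_feasible_Ct_ge_weighted_start_times assms(1,4,6,9) feas speeds_pos
    by simp
  finally show ?thesis .
qed

end
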